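(* Let $a:\mathbb{R}^d\to[0,\infty)$ satisfy $a(y)=a(-y)$, $\int_{\mathbb{R}^d}a=1$, $\widehat a\in L^1(\mathbb{R}^d)$, $|a(y)|<Ce^{-\delta|y|}$ for some $C<\infty$, $\delta>0$, and suppose there are $\varepsilon_0<\delta$ and $C'<\infty$ with $\|\widehat a(\cdot+i\tau)\|_{L^1(\mathbb{R}^d)}\le C'$ for all $|\tau|\le\varepsilon_0$. Let $p(t,x)$ be the transition density of the random walk with generator $\mathcal L\psi(x)=\int(\psi(x+y)-\psi(x))a(y)dy$, i.e. for $t>0$, $x\ne0$, $p(t,x)=\frac{e^{-t}}{(2\pi)^d}\int_{\mathbb{R}^d}e^{i(k,x)}(e^{t\widehat a(k)}-1)\,dk$. Then there exist constants $\alpha<\infty$ and $C''<\infty$ such that \[p(t,x)\le C''te^{\alpha\varepsilon^2t-\varepsilon|x|},\qquad x\ne0,\ t>0,\] for all sufficiently small $\varepsilon\ge0$.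
   Context: $\widehat a(z)=\int e^{-i(z,y)}a(y)\,dy$, analytic in $|\mathrm{Im}\,z|<\delta$. *)

theory Defs
  imports "HOL-Analysis.Analysis"
begin

text \<open>Complexified Fourier transform of a kernel a on R^d, evaluated at z = k + i tau:
  hat a (k + i tau) = int exp(-i (k + i tau, y)) a(y) dy = int exp((tau,y) - i (k,y)) a(y) dy.\<close>
definition fourier_hat :: "('a::euclidean_space \<Rightarrow> real) \<Rightarrow> 'a \<Rightarrow> 'a \<Rightarrow> complex" where
  "fourier_hat a k \<tau> =
     (LINT y|lborel. exp (complex_of_real (\<tau> \<bullet> y) - \<i> * complex_of_real (k \<bullet> y)) * complex_of_real (a y))"

text \<open>The integral is real by the symmetry of a; we take its real part.\<close>
definition trans_density :: "('a::euclidean_space \<Rightarrow> real) \<Rightarrow> real \<Rightarrow> 'a \<Rightarrow> real" where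
  "trans_density a t x =
     Re (complex_of_real (exp (- t) / (2 * pi) ^ DIM('a)) *
         (LINT k|lborel. exp (\<i> * complex_of_real (k \<bullet> x)) *
                         (exp (complex_of_real t * fourier_hat a k 0) - 1)))"

end

theory Submission
  imports Defs "HOL-Probability.Probability"
begin

text \<open>Expanding the exponential, \<open>p(t,x) = e^(-t) \<Sum>_(n \<ge> 1) t^n/n! a^(*n)(x)\<close>, with \<open>a^(*n)\<close> the
  \<open>n\<close>-fold convolution power. The weight \<open>exp (\<tau> \<bullet> x)\<close> is multiplicative under convolution, so
  \<open>a^(*n)(x) exp (\<tau> \<bullet> x) \<le> C M(\<tau>)^(n-1)\<close>, where \<open>C\<close> bounds \<open>a(y) exp (\<tau> \<bullet> y)\<close> and
  \<open>M(\<tau>) = \<integral> a(y) exp (\<tau> \<bullet> y) dy\<close>; summing gives \<open>p(t,x) \<le> C t exp (t (M(\<tau>) - 1) - \<tau> \<bullet> x)\<close>.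
  By symmetry \<open>M(\<tau>) = \<integral> a(y) cosh (\<tau> \<bullet> y) dy = 1 + O(|\<tau>|^2)\<close>, and \<open>\<tau> = \<epsilon> x / |x|\<close> gives the
  claim. Fourier inversion is avoided by first damping the \<open>k\<close>-integral with a Gaussian cutoff,
  whose inverse transform is explicit, and removing the cutoff by dominated convergence at the end.\<close>

section \<open>Lebesgue integrals on Euclidean space\<close>

interpretation lborel_product: product_sigma_finite "\<lambda>_::'i. (lborel :: real measure)"
  by unfold_locales

lemma
  fixes f :: "'a::euclidean_space \<Rightarrow> real \<Rightarrow> 'b::{real_normed_field,banach,second_countable_topology}"
  assumes int: "\<And>b. b \<in> Basis \<Longrightarrow> integrable lborel (f b)"
  shows integrable_prod_Basis: "integrable (lborel::'a measure) (\<lambda>x. \<Prod>b\<in>Basis. f b (x \<bullet> b))"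
    and integral_prod_Basis:
      "(\<integral>x. (\<Prod>b\<in>Basis. f b (x \<bullet> b)) \<partial>(lborel::'a measure)) = (\<Prod>b\<in>Basis. integral\<^sup>L lborel (f b))"
proof -
  have [measurable]: "(\<lambda>g. \<Sum>b\<in>Basis. g b *\<^sub>R b) \<in> (\<Pi>\<^sub>M b\<in>(Basis::'a set). lborel) \<rightarrow>\<^sub>M (borel::'a measure)"
    by simp
  have [measurable]: "\<And>b. b \<in> Basis \<Longrightarrow> f b \<in> borel_measurable borel"
    using borel_measurable_integrable[OF int] by simp
  have meas: "(\<lambda>x. \<Prod>b\<in>Basis. f b (x \<bullet> b)) \<in> borel_measurable (borel::'a measure)"
    by (intro borel_measurable_prod) measurable
  have coords: "(\<Prod>b\<in>Basis. f b ((\<Sum>c\<in>Basis. g c *\<^sub>R c) \<bullet> b)) = (\<Prod>b\<in>Basis. f b (g b))"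
    if "g \<in> space (\<Pi>\<^sub>M b\<in>(Basis::'a set). lborel)" for g
    by (intro prod.cong refl) (simp add: inner_sum_left inner_Basis if_distrib cong: if_cong)
  have "integrable (\<Pi>\<^sub>M b\<in>(Basis::'a set). lborel) (\<lambda>g. \<Prod>b\<in>Basis. f b (g b))"
    by (intro lborel_product.product_integrable_prod int) auto
  then show "integrable (lborel::'a measure) (\<lambda>x. \<Prod>b\<in>Basis. f b (x \<bullet> b))"
    by (subst lborel_eq, subst integrable_distr_eq) (simp_all add: meas coords cong: Bochner_Integration.integrable_cong)
  have "(\<integral>g. (\<Prod>b\<in>Basis. f b (g b)) \<partial>(\<Pi>\<^sub>M b\<in>(Basis::'a set). lborel)) = (\<Prod>b\<in>Basis. integral\<^sup>L lborel (f b))"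
    by (intro lborel_product.product_integral_prod int) auto
  then show "(\<integral>x. (\<Prod>b\<in>Basis. f b (x \<bullet> b)) \<partial>(lborel::'a measure)) = (\<Prod>b\<in>Basis. integral\<^sup>L lborel (f b))"
    by (subst lborel_eq, subst integral_distr) (simp_all add: meas coords cong: Bochner_Integration.integral_cong)
qed

lemma nn_integral_lborel_affine:
  fixes f :: "'a::euclidean_space \<Rightarrow> ennreal" and c :: real
  assumes [measurable]: "f \<in> borel_measurable borel" and c: "c \<noteq> 0"
  shows "(\<integral>\<^sup>+x. f x \<partial>lborel) = \<bar>c\<bar>^DIM('a) * (\<integral>\<^sup>+x. f (t + c *\<^sub>R x) \<partial>lborel)"
  by (subst lborel_affine[OF c, of t])
     (simp add: nn_integral_density nn_integral_distr nn_integral_cmult)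

lemma integrable_lborel_affine:
  fixes f :: "'a::euclidean_space \<Rightarrow> 'b :: {banach, second_countable_topology}"
  assumes f: "integrable lborel f" and c: "c \<noteq> 0"
  shows "integrable lborel (\<lambda>x. f (t + c *\<^sub>R x))"
  using f f[THEN borel_measurable_integrable] unfolding integrable_iff_bounded
  by (subst (asm) nn_integral_lborel_affine[where c=c and t=t]) (auto simp: ennreal_mult_less_top c)

lemma integrable_lborel_reflect:
  fixes f :: "'a::euclidean_space \<Rightarrow> 'b :: {banach, second_countable_topology}"
  assumes "integrable lborel f"
  shows "integrable lborel (\<lambda>x. f (t - x))"
  using integrable_lborel_affine[OF assms, of "-1" t] by simp

lemma integral_lborel_reflect:
  fixes f :: "'a::euclidean_space \<Rightarrow> 'b :: {banach, second_countable_topology}"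
  shows "(\<integral>x. f (t - x) \<partial>lborel) = (\<integral>x. f x \<partial>lborel)"
proof cases
  assume f[measurable]: "integrable lborel f"
  show ?thesis
    using integrable_lborel_affine[OF f, of "-1" t]
    by (subst (2) lborel_affine[of "-1" t]) (simp_all add: density_1 integral_distr)
next
  assume "\<not> integrable lborel f"
  moreover have "\<not> integrable lborel (\<lambda>x. f (t - x))"
    using integrable_lborel_reflect[of "\<lambda>x. f (t - x)" t] \<open>\<not> integrable lborel f\<close> by auto
  ultimately show ?thesis by (simp add: not_integrable_integral_eq)
qed

lemma integrable_exp_neg_abs:
  assumes c: "0 < (c::real)"
  shows "integrable lborel (\<lambda>s. exp (- c * \<bar>s\<bar>))"
proof -
  interpret prob_space "density lborel (exponential_density c)"
    by (rule prob_space_exponential_density[OF c])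
  have "(\<integral>\<^sup>+x. ennreal (exponential_density c x) \<partial>lborel) = 1"
    using emeasure_space_1 by (simp add: emeasure_density)
  then have f: "integrable lborel (exponential_density c)"
    unfolding integrable_iff_bounded using c by (simp add: exponential_density_nonneg)
  have "integrable lborel (\<lambda>s. (exponential_density c s + exponential_density c (0 + (-1) * s)) / c)"
    using f lborel_integrable_real_affine[OF f, of "-1" 0] by auto
  then show ?thesis
    by (rule Bochner_Integration.integrable_bound)
       (use c in \<open>auto simp: exponential_density_def abs_if field_simps\<close>)
qed

lemma integrable_exp_neg_norm:
  assumes c: "0 < c"
  shows "integrable lborel (\<lambda>y::'a::euclidean_space. exp (- c * norm y))"
proof -
  define e where "e = c / DIM('a)"
  have e: "0 < e" using c by (simp add: e_def)
  have "integrable lborel (\<lambda>y::'a. \<Prod>b\<in>Basis. exp (- e * \<bar>y \<bullet> b\<bar>))"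
    by (rule integrable_prod_Basis) (rule integrable_exp_neg_abs[OF e])
  then show ?thesis
  proof (rule Bochner_Integration.integrable_bound)
    show "AE y in lborel. norm (exp (- c * norm (y::'a))) \<le> norm (\<Prod>b\<in>Basis. exp (- e * \<bar>y \<bullet> b\<bar>))"
    proof (rule AE_I2)
      fix y :: 'a
      have "(\<Sum>b\<in>Basis. \<bar>y \<bullet> b\<bar>) \<le> of_nat (card (Basis::'a set)) * norm y"
        by (rule sum_bounded_above) (rule Basis_le_norm)
      then have "e * (\<Sum>b\<in>Basis. \<bar>y \<bullet> b\<bar>) \<le> c * norm y"
        using c by (simp add: e_def field_simps)
      then have "exp (- c * norm y) \<le> exp (\<Sum>b\<in>Basis. - e * \<bar>y \<bullet> b\<bar>)"
        by (simp add: sum_distrib_left[symmetric] sum_negf)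
      then show "norm (exp (- c * norm y)) \<le> norm (\<Prod>b\<in>Basis. exp (- e * \<bar>y \<bullet> b\<bar>))"
        by (simp add: exp_sum abs_prod)
    qed
  qed measurable
qed

section \<open>Gaussian smoothing\<close>

definition gaussian_kernel_1d :: "real \<Rightarrow> real \<Rightarrow> real" where
  "gaussian_kernel_1d \<sigma> s = sqrt (2*pi) / \<sigma> * exp (- (s^2) / (2*\<sigma>^2))"

lemma
  fixes \<sigma> u :: real
  assumes \<sigma>: "0 < \<sigma>"
  shows integrable_gaussian_fourier_1d:
      "integrable lborel (\<lambda>k. complex_of_real (exp (- ((\<sigma> * k)^2) / 2)) * exp (\<i> * complex_of_real (k*u)))"
    and gaussian_fourier_1d:
      "(\<integral>k. complex_of_real (exp (- ((\<sigma> * k)^2) / 2)) * exp (\<i> * complex_of_real (k*u)) \<partial>lborel)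
         = complex_of_real (gaussian_kernel_1d \<sigma> u)"
proof -
  have nd: "normal_density 0 (1/\<sigma>) k = \<sigma> / sqrt (2*pi) * exp (- ((\<sigma> * k)^2) / 2)" for k
    using \<sigma> by (simp add: normal_density_def real_sqrt_mult real_sqrt_divide field_simps)
  have "integrable lborel (\<lambda>k. (sqrt (2*pi) / \<sigma>) * normal_density 0 (1/\<sigma>) k)"
    using \<sigma> by (intro integrable_mult_right integrable_normal_density) auto
  then show "integrable lborel (\<lambda>k. complex_of_real (exp (- ((\<sigma> * k)^2) / 2)) * exp (\<i> * complex_of_real (k*u)))"
    by (rule Bochner_Integration.integrable_bound) (use \<sigma> in \<open>simp_all add: nd norm_mult\<close>)
  define \<theta> where "\<theta> = u / \<sigma>"
  define X where "X = (\<integral>k. complex_of_real (exp (- ((\<sigma> * k)^2) / 2)) * exp (\<i> * complex_of_real (k*u)) \<partial>lborel)"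
  have "complex_of_real (exp (- (\<theta>^2) / 2))
      = (\<integral>x. std_normal_density x *\<^sub>R exp (\<i> * complex_of_real (\<theta> * x)) \<partial>lborel)"
    using char_std_normal_distribution unfolding char_def
    by (subst (asm) integral_density) (auto simp: fun_eq_iff)
  also have "\<dots> = \<bar>\<sigma>\<bar> *\<^sub>R (\<integral>k. std_normal_density (0 + \<sigma> * k) *\<^sub>R exp (\<i> * complex_of_real (\<theta> * (0 + \<sigma> * k))) \<partial>lborel)"
    by (rule lborel_integral_real_affine) (use \<sigma> in simp)
  also have "\<dots> = complex_of_real (\<sigma> / sqrt (2*pi)) * X"
    using \<sigma> by (simp add: X_def std_normal_density_def \<theta>_def scaleR_conv_of_real field_simps flip: integral_mult_right_zero)
  finally have "X = complex_of_real (sqrt (2*pi) / \<sigma>) * complex_of_real (exp (- (\<theta>^2) / 2))"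
    using \<sigma> by (simp add: field_simps flip: of_real_mult)
  then show "X = complex_of_real (gaussian_kernel_1d \<sigma> u)"
    using \<sigma> by (simp add: gaussian_kernel_1d_def \<theta>_def power_divide flip: of_real_mult)
qed

lemma
  fixes \<sigma> r :: real
  assumes \<sigma>: "0 < \<sigma>"
  shows integrable_gaussian_kernel_1d_exp: "integrable lborel (\<lambda>u. gaussian_kernel_1d \<sigma> u * exp (r*u))"
    and gaussian_kernel_1d_mgf: "(\<integral>u. gaussian_kernel_1d \<sigma> u * exp (r*u) \<partial>lborel) = 2*pi*exp (\<sigma>^2*r^2/2)"
proof -
  \<comment> \<open>Completing the square.\<close>
  have eq: "gaussian_kernel_1d \<sigma> u * exp (r*u) = 2*pi*exp (\<sigma>^2*r^2/2) * normal_density (\<sigma>^2*r) \<sigma> u" for u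
  proof -
    have "exp (- (u^2) / (2*\<sigma>^2)) * exp (r*u) = exp (\<sigma>^2*r^2/2) * exp (- ((u - \<sigma>^2*r)^2) / (2*\<sigma>^2))"
      unfolding exp_add[symmetric] using \<sigma> by (intro arg_cong[where f=exp]) (simp add: field_simps power2_eq_square)
    moreover have "sqrt (2*pi) / \<sigma> = 2*pi / sqrt (2*pi*\<sigma>^2)"
      using \<sigma> by (simp add: real_sqrt_mult field_simps)
    ultimately show ?thesis
      by (simp add: gaussian_kernel_1d_def normal_density_def)
  qed
  show "integrable lborel (\<lambda>u. gaussian_kernel_1d \<sigma> u * exp (r*u))"
    unfolding eq using \<sigma> by (intro integrable_mult_right integrable_normal_density) auto
  show "(\<integral>u. gaussian_kernel_1d \<sigma> u * exp (r*u) \<partial>lborel) = 2*pi*exp (\<sigma>^2*r^2/2)"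
    unfolding eq using \<sigma> by simp
qed

text \<open>\<open>gaussian_cutoff \<sigma>\<close> multiplies on the Fourier side; up to the factor \<open>(2\<pi>)^d\<close>,
  \<open>gaussian_kernel \<sigma>\<close> is its inverse Fourier transform, so the smoothing amounts to convolution
  with \<open>gaussian_kernel \<sigma>\<close>.\<close>

definition gaussian_cutoff :: "real \<Rightarrow> 'a::euclidean_space \<Rightarrow> real" where
  "gaussian_cutoff \<sigma> k = (\<Prod>b\<in>Basis. exp (- ((\<sigma> * (k \<bullet> b))^2) / 2))"

definition gaussian_kernel :: "real \<Rightarrow> 'a::euclidean_space \<Rightarrow> real" where
  "gaussian_kernel \<sigma> u = (\<Prod>b\<in>Basis. gaussian_kernel_1d \<sigma> (u \<bullet> b))"

lemma gaussian_cutoff_pos: "0 < gaussian_cutoff \<sigma> k"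
  unfolding gaussian_cutoff_def by (intro prod_pos) simp

lemma gaussian_cutoff_le_1: "gaussian_cutoff \<sigma> k \<le> 1"
  unfolding gaussian_cutoff_def by (intro prod_le_1) auto

lemma gaussian_cutoff_measurable[measurable]: "gaussian_cutoff \<sigma> \<in> borel_measurable borel"
  unfolding gaussian_cutoff_def by measurable

lemma gaussian_cutoff_tendsto_1:
  "(f \<longlongrightarrow> 0) F \<Longrightarrow> ((\<lambda>n. gaussian_cutoff (f n) k) \<longlongrightarrow> 1) F"
  unfolding gaussian_cutoff_def by (rule tendsto_eq_intros refl | simp)+

lemma gaussian_kernel_nonneg: "0 < \<sigma> \<Longrightarrow> 0 \<le> gaussian_kernel \<sigma> u"
  unfolding gaussian_kernel_def gaussian_kernel_1d_def by (intro prod_nonneg) simp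

lemma
  fixes u :: "'a::euclidean_space"
  assumes \<sigma>: "0 < \<sigma>"
  shows integrable_gaussian_cutoff_fourier:
      "integrable lborel (\<lambda>k::'a. complex_of_real (gaussian_cutoff \<sigma> k) * exp (\<i> * complex_of_real (k \<bullet> u)))"
    and gaussian_cutoff_fourier:
      "(\<integral>k. complex_of_real (gaussian_cutoff \<sigma> k) * exp (\<i> * complex_of_real (k \<bullet> u)) \<partial>lborel)
         = complex_of_real (gaussian_kernel \<sigma> u)"
proof -
  define f where "f b s = complex_of_real (exp (- ((\<sigma> * s)^2) / 2)) * exp (\<i> * complex_of_real (s * (u \<bullet> b)))" for b s
  have split: "complex_of_real (gaussian_cutoff \<sigma> k) * exp (\<i> * complex_of_real (k \<bullet> u)) = (\<Prod>b\<in>Basis. f b (k \<bullet> b))" for k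
  proof -
    have "exp (\<i> * complex_of_real (k \<bullet> u)) = (\<Prod>b\<in>Basis. exp (\<i> * complex_of_real ((k \<bullet> b) * (u \<bullet> b))))"
      by (subst euclidean_inner) (simp add: sum_distrib_left exp_sum)
    then show ?thesis
      unfolding f_def gaussian_cutoff_def by (simp add: prod.distrib)
  qed
  have f: "\<And>b. integrable lborel (f b)"
    unfolding f_def by (rule integrable_gaussian_fourier_1d[OF \<sigma>])
  show "integrable lborel (\<lambda>k::'a. complex_of_real (gaussian_cutoff \<sigma> k) * exp (\<i> * complex_of_real (k \<bullet> u)))"
    unfolding split by (rule integrable_prod_Basis[OF f])
  show "(\<integral>k. complex_of_real (gaussian_cutoff \<sigma> k) * exp (\<i> * complex_of_real (k \<bullet> u)) \<partial>lborel)
      = complex_of_real (gaussian_kernel \<sigma> u)"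
    unfolding split integral_prod_Basis[OF f] gaussian_kernel_def of_real_prod
    by (intro prod.cong refl) (unfold f_def[abs_def], rule gaussian_fourier_1d[OF \<sigma>])
qed

lemma integrable_gaussian_cutoff:
  assumes \<sigma>: "0 < \<sigma>"
  shows "integrable lborel (gaussian_cutoff \<sigma> :: 'a::euclidean_space \<Rightarrow> real)"
  using integrable_norm[OF integrable_gaussian_cutoff_fourier[OF \<sigma>, of 0]]
  by (simp add: norm_mult gaussian_cutoff_pos abs_of_pos)

lemma
  fixes \<tau> :: "'a::euclidean_space"
  assumes \<sigma>: "0 < \<sigma>"
  shows integrable_gaussian_kernel_exp: "integrable lborel (\<lambda>u. gaussian_kernel \<sigma> u * exp (\<tau> \<bullet> u))"
    and gaussian_kernel_mgf:
      "(\<integral>u. gaussian_kernel \<sigma> u * exp (\<tau> \<bullet> u) \<partial>lborel) = (2*pi)^DIM('a) * exp (\<sigma>^2 * (norm \<tau>)^2 / 2)"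
proof -
  define f where "f b s = gaussian_kernel_1d \<sigma> s * exp ((\<tau> \<bullet> b) * s)" for b s
  have split: "gaussian_kernel \<sigma> u * exp (\<tau> \<bullet> u) = (\<Prod>b\<in>Basis. f b (u \<bullet> b))" for u
  proof -
    have "exp (\<tau> \<bullet> u) = (\<Prod>b\<in>Basis. exp ((\<tau> \<bullet> b) * (u \<bullet> b)))"
      by (subst euclidean_inner) (simp add: exp_sum inner_commute)
    then show ?thesis
      unfolding f_def gaussian_kernel_def by (simp add: prod.distrib)
  qed
  have f: "\<And>b. integrable lborel (f b)"
    unfolding f_def by (rule integrable_gaussian_kernel_1d_exp[OF \<sigma>])
  show "integrable lborel (\<lambda>u. gaussian_kernel \<sigma> u * exp (\<tau> \<bullet> u))"
    unfolding split by (rule integrable_prod_Basis[OF f])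
  have norm2: "(norm \<tau>)^2 = (\<Sum>b\<in>Basis. (\<tau> \<bullet> b)^2)"
    by (simp only: power2_norm_eq_inner) (simp add: euclidean_inner[of \<tau> \<tau>] power2_eq_square)
  have "(\<integral>u. gaussian_kernel \<sigma> u * exp (\<tau> \<bullet> u) \<partial>lborel) = (\<Prod>b\<in>(Basis::'a set). 2*pi*exp (\<sigma>^2*(\<tau> \<bullet> b)^2/2))"
    unfolding split integral_prod_Basis[OF f]
    by (intro prod.cong refl) (simp add: f_def[abs_def] gaussian_kernel_1d_mgf[OF \<sigma>])
  also have "\<dots> = (2*pi)^DIM('a) * exp (\<sigma>^2 * (norm \<tau>)^2 / 2)"
    by (simp add: prod.distrib norm2 exp_sum sum_distrib_left sum_divide_distrib)
  finally show "(\<integral>u. gaussian_kernel \<sigma> u * exp (\<tau> \<bullet> u) \<partial>lborel) = (2*pi)^DIM('a) * exp (\<sigma>^2 * (norm \<tau>)^2 / 2)" .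
qed

section \<open>Exponential series\<close>

lemma sum_power_Suc_div_fact_le:
  fixes t M :: real
  assumes "0 \<le> t" "0 \<le> M"
  shows "(\<Sum>n<N. t^(Suc n) / fact (Suc n) * M^n) \<le> t * exp (t * M)"
proof -
  have "t^(Suc n) / fact (Suc n) * M^n \<le> t * ((t*M)^n /\<^sub>R fact n)" for n
  proof -
    have "(t*M)^n / fact (Suc n) \<le> (t*M)^n / fact n"
      using assms by (intro divide_left_mono) (auto simp: fact_mono)
    then show ?thesis
      using assms by (simp add: power_mult_distrib mult_left_mono divide_inverse mult_ac)
  qed
  then have "(\<Sum>n<N. t^(Suc n) / fact (Suc n) * M^n) \<le> (\<Sum>n<N. t * ((t*M)^n /\<^sub>R fact n))"
    by (rule sum_mono)
  also have "\<dots> = t * (\<Sum>n<N. (t*M)^n /\<^sub>R fact n)"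
    by (simp add: sum_distrib_left)
  also have "\<dots> \<le> t * exp (t * M)"
  proof (rule mult_left_mono)
    have "(\<Sum>n<N. (t*M)^n /\<^sub>R fact n) \<le> (\<Sum>n. (t*M)^n /\<^sub>R fact n)"
      using exp_converges[of "t * M"] assms by (intro sum_le_suminf) (auto simp: sums_iff)
    then show "(\<Sum>n<N. (t*M)^n /\<^sub>R fact n) \<le> exp (t * M)"
      using exp_converges[of "t * M"] by (simp add: sums_iff)
  qed (use assms in simp)
  finally show ?thesis .
qed

lemma exp_minus_one_sums: "(\<lambda>n. w^Suc n / fact (Suc n)) sums (exp w - 1)"
  for w :: complex
proof -
  have "(\<lambda>n. w^n / fact n) sums exp w"
    using exp_converges[of w] by (simp add: scaleR_conv_of_real divide_inverse mult.commute)
  then show ?thesis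
    by (subst sums_Suc_iff) simp
qed

lemma norm_exp_minus_one_partial_sum_le:
  fixes w :: complex
  shows "norm (\<Sum>n<N. w^Suc n / fact (Suc n)) \<le> norm w * exp (norm w)"
proof -
  have "norm (\<Sum>n<N. w^Suc n / fact (Suc n)) \<le> (\<Sum>n<N. norm w^Suc n / fact (Suc n) * 1^n)"
    by (intro order.trans[OF norm_sum] sum_mono) (simp add: norm_divide norm_power del: power_Suc fact_Suc)
  also have "\<dots> \<le> norm w * exp (norm w * 1)"
    by (rule sum_power_Suc_div_fact_le) auto
  finally show ?thesis by simp
qed

lemma norm_exp_minus_one_le: "norm (exp w - 1) \<le> norm w * exp (norm w)"
  for w :: complex
  using exp_minus_one_sums[of w] norm_exp_minus_one_partial_sum_le[of w]
  unfolding sums_def by (intro LIMSEQ_le_const2[OF tendsto_norm]) auto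

text \<open>The partial sums of the integrands are dominated by \<open>|F| |z| exp |z|\<close>.\<close>

lemma integral_mult_exp_minus_one_sums:
  fixes F g :: "'b \<Rightarrow> complex" and z :: complex
  assumes F: "integrable M F" and g[measurable]: "g \<in> borel_measurable M"
    and g_le: "\<And>k. norm (g k) \<le> 1"
  shows "(\<lambda>n. z^Suc n / fact (Suc n) * (\<integral>k. F k * g k ^ Suc n \<partial>M))
           sums (\<integral>k. F k * (exp (z * g k) - 1) \<partial>M)"
proof -
  have [measurable]: "F \<in> borel_measurable M"
    using F by auto
  define S where "S N k = (\<Sum>n<N. (z * g k)^Suc n / fact (Suc n))" for N k
  have S_le: "norm (S N k) \<le> norm z * exp (norm z)" for N k
  proof -
    have "norm (z * g k) \<le> norm z"
      using g_le[of k] by (simp add: norm_mult mult_left_le)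
    then have "norm (z * g k) * exp (norm (z * g k)) \<le> norm z * exp (norm z)"
      by (intro mult_mono) auto
    then show ?thesis
      using norm_exp_minus_one_partial_sum_le[of "z * g k" N] unfolding S_def by linarith
  qed
  have "(\<lambda>N. \<integral>k. F k * S N k \<partial>M) \<longlonglongrightarrow> (\<integral>k. F k * (exp (z * g k) - 1) \<partial>M)"
  proof (rule integral_dominated_convergence[where w="\<lambda>k. norm (F k) * (norm z * exp (norm z))"])
    show "integrable M (\<lambda>k. norm (F k) * (norm z * exp (norm z)))"
      using F by (intro integrable_mult_left integrable_norm)
    show "AE k in M. norm (F k * S N k) \<le> norm (F k) * (norm z * exp (norm z))" for N
      using S_le by (intro AE_I2) (simp add: norm_mult mult_left_mono)
    show "AE k in M. (\<lambda>N. F k * S N k) \<longlonglongrightarrow> F k * (exp (z * g k) - 1)"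
      using exp_minus_one_sums unfolding S_def sums_def by (intro AE_I2 tendsto_mult_left)
  qed (simp_all add: S_def)
  moreover have "(\<integral>k. F k * S N k \<partial>M) = (\<Sum>n<N. z^Suc n / fact (Suc n) * (\<integral>k. F k * g k ^ Suc n \<partial>M))" for N
  proof -
    have int: "integrable M (\<lambda>k. F k * g k ^ Suc n)" for n
    proof (rule Bochner_Integration.integrable_bound[OF F])
      have "norm (g k ^ Suc n) \<le> 1" for k
        unfolding norm_power by (intro power_le_one g_le) simp
      then show "AE k in M. norm (F k * g k ^ Suc n) \<le> norm (F k)"
        by (intro AE_I2) (simp add: norm_mult mult_left_le del: power_Suc)
    qed simp
    have "(\<integral>k. F k * S N k \<partial>M) = (\<integral>k. (\<Sum>n<N. z^Suc n / fact (Suc n) * (F k * g k ^ Suc n)) \<partial>M)"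
      by (simp add: S_def sum_distrib_left power_mult_distrib mult_ac)
    also have "\<dots> = (\<Sum>n<N. z^Suc n / fact (Suc n) * (\<integral>k. F k * g k ^ Suc n \<partial>M))"
      using int by (simp add: Bochner_Integration.integral_sum)
    finally show ?thesis .
  qed
  ultimately show ?thesis
    by (simp add: sums_def)
qed

section \<open>Smoothed convolution powers of the jump density\<close>

lemma fourier_hat_measurable:
  assumes [measurable]: "a \<in> borel_measurable borel"
  shows "(\<lambda>k. fourier_hat a k \<tau>) \<in> borel_measurable borel"
  unfolding fourier_hat_def
  by (rule lborel.borel_measurable_lebesgue_integral[simplified]) measurable

text \<open>Up to the factor \<open>(2\<pi>)^d\<close>, this is the \<open>n\<close>-fold convolution power of \<open>a\<close> convolved with
  \<open>gaussian_kernel \<sigma>\<close>; the cutoff makes the integral converge even for \<open>n = 0\<close>.\<close>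

definition smoothed_conv_power :: "('a::euclidean_space \<Rightarrow> real) \<Rightarrow> real \<Rightarrow> nat \<Rightarrow> 'a \<Rightarrow> complex" where
  "smoothed_conv_power a \<sigma> n x =
     (\<integral>k. complex_of_real (gaussian_cutoff \<sigma> k) * exp (\<i> * complex_of_real (k \<bullet> x)) * fourier_hat a k 0 ^ n \<partial>lborel)"

definition exp_moment :: "('a::euclidean_space \<Rightarrow> real) \<Rightarrow> 'a \<Rightarrow> real" where
  "exp_moment a \<tau> = (\<integral>y. a y * exp (\<tau> \<bullet> y) \<partial>lborel)"

locale jump_density =
  fixes a :: "'a::euclidean_space \<Rightarrow> real"
  assumes a_nonneg: "\<And>y. 0 \<le> a y"
    and a_integrable: "integrable lborel a"
    and a_integral: "(\<integral>y. a y \<partial>lborel) = 1"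
begin

lemma a_measurable[measurable]: "a \<in> borel_measurable borel"
  using borel_measurable_integrable[OF a_integrable] by simp

lemma fourier_hat_0_measurable[measurable]: "(\<lambda>k. fourier_hat a k 0) \<in> borel_measurable borel"
  by (rule fourier_hat_measurable) measurable

lemma norm_fourier_hat_le_1: "norm (fourier_hat a k 0) \<le> 1"
proof -
  have "norm (fourier_hat a k 0) \<le> (\<integral>y. norm (exp (- (\<i> * complex_of_real (k \<bullet> y))) * complex_of_real (a y)) \<partial>lborel)"
    unfolding fourier_hat_def by (rule integral_norm_bound[THEN order_trans]) simp
  also have "\<dots> = 1"
    using a_integral by (simp add: norm_mult a_nonneg)
  finally show ?thesis .
qed

lemma exp_moment_nonneg: "0 \<le> exp_moment a \<tau>"
  unfolding exp_moment_def by (intro Bochner_Integration.integral_nonneg) (simp add: a_nonneg)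

lemma integrable_smoothed_integrand:
  assumes \<sigma>: "0 < \<sigma>"
  shows "integrable lborel (\<lambda>k. complex_of_real (gaussian_cutoff \<sigma> k) * exp (\<i> * complex_of_real (k \<bullet> x)) * fourier_hat a k 0 ^ n)"
proof (rule Bochner_Integration.integrable_bound[OF integrable_gaussian_cutoff[OF \<sigma>]])
  have "norm (fourier_hat a k 0) ^ n \<le> 1" for k
    by (intro power_le_one norm_fourier_hat_le_1) simp
  then show "AE k in lborel. norm (complex_of_real (gaussian_cutoff \<sigma> k) * exp (\<i> * complex_of_real (k \<bullet> x)) * fourier_hat a k 0 ^ n)
      \<le> norm (gaussian_cutoff \<sigma> k)"
    by (intro AE_I2) (simp add: norm_mult norm_power mult_left_le gaussian_cutoff_pos abs_of_pos)
qed measurable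

lemma smoothed_conv_power_0: "0 < \<sigma> \<Longrightarrow> smoothed_conv_power a \<sigma> 0 u = complex_of_real (gaussian_kernel \<sigma> u)"
  unfolding smoothed_conv_power_def by (simp add: gaussian_cutoff_fourier)

lemma smoothed_conv_power_Suc:
  assumes \<sigma>: "0 < \<sigma>"
  shows "smoothed_conv_power a \<sigma> (Suc n) x = (\<integral>y. complex_of_real (a y) * smoothed_conv_power a \<sigma> n (x - y) \<partial>lborel)"
proof -
  define h where "h k y = complex_of_real (gaussian_cutoff \<sigma> k) * exp (\<i> * complex_of_real (k \<bullet> (x - y)))
    * fourier_hat a k 0 ^ n * complex_of_real (a y)" for k y :: 'a
  have [measurable]: "(\<lambda>(k, y). h k y) \<in> borel_measurable (lborel \<Otimes>\<^sub>M lborel)"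
    unfolding h_def by measurable
  have norm_h: "norm (h k y) = (gaussian_cutoff \<sigma> k * norm (fourier_hat a k 0) ^ n) * a y" for k y
    by (simp add: h_def norm_mult norm_power gaussian_cutoff_pos abs_of_pos a_nonneg)
  have "integrable lborel (\<lambda>k. gaussian_cutoff \<sigma> k * norm (fourier_hat a k 0) ^ n)"
    using integrable_norm[OF integrable_smoothed_integrand[OF \<sigma>, of 0 n]]
    by (simp add: norm_mult norm_power gaussian_cutoff_pos abs_of_pos)
  moreover have "integrable lborel (h k)" for k
  proof (rule Bochner_Integration.integrable_bound)
    show "integrable lborel (\<lambda>y. gaussian_cutoff \<sigma> k * a y)"
      using a_integrable by simp
    have "norm (fourier_hat a k 0) ^ n \<le> 1"
      by (intro power_le_one norm_fourier_hat_le_1) simp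
    then show "AE y in lborel. norm (h k y) \<le> norm (gaussian_cutoff \<sigma> k * a y)"
      using gaussian_cutoff_pos[of \<sigma> k] a_nonneg
      by (intro AE_I2) (simp add: norm_h abs_mult mult_right_mono mult_left_le)
  qed (simp add: h_def)
  ultimately have h_int: "integrable (lborel \<Otimes>\<^sub>M lborel) (\<lambda>(k, y). h k y)"
    using a_integral by (intro lborel_pair.Fubini_integrable) (auto simp: norm_h)
  have "complex_of_real (gaussian_cutoff \<sigma> k) * exp (\<i> * complex_of_real (k \<bullet> x)) * fourier_hat a k 0 ^ Suc n
      = (\<integral>y. h k y \<partial>lborel)" for k
  proof -
    have "complex_of_real (gaussian_cutoff \<sigma> k) * exp (\<i> * complex_of_real (k \<bullet> x)) * fourier_hat a k 0 ^ Suc n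
      = (\<integral>y. (complex_of_real (gaussian_cutoff \<sigma> k) * exp (\<i> * complex_of_real (k \<bullet> x)) * fourier_hat a k 0 ^ n)
            * (exp (- (\<i> * complex_of_real (k \<bullet> y))) * complex_of_real (a y)) \<partial>lborel)"
      by (subst integral_mult_right_zero) (simp add: fourier_hat_def)
    also have "\<dots> = (\<integral>y. h k y \<partial>lborel)"
      unfolding h_def by (intro Bochner_Integration.integral_cong refl)
        (simp add: algebra_simps flip: exp_add)
    finally show ?thesis .
  qed
  then have "smoothed_conv_power a \<sigma> (Suc n) x = (\<integral>k. (\<integral>y. h k y \<partial>lborel) \<partial>lborel)"
    unfolding smoothed_conv_power_def by simp
  also have "\<dots> = (\<integral>y. (\<integral>k. h k y \<partial>lborel) \<partial>lborel)"
    by (rule lborel_pair.Fubini_integral[OF h_int, symmetric])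
  also have "\<dots> = (\<integral>y. complex_of_real (a y) * smoothed_conv_power a \<sigma> n (x - y) \<partial>lborel)"
    unfolding smoothed_conv_power_def h_def
    by (intro Bochner_Integration.integral_cong refl) (simp add: mult_ac flip: integral_mult_right_zero)
  finally show ?thesis .
qed

lemma norm_smoothed_conv_power_Suc_weighted_le:
  assumes \<sigma>: "0 < \<sigma>"
  shows "norm (smoothed_conv_power a \<sigma> (Suc n) x) * exp (\<tau> \<bullet> x)
    \<le> (\<integral>y. (a y * exp (\<tau> \<bullet> y)) * (norm (smoothed_conv_power a \<sigma> n (x - y)) * exp (\<tau> \<bullet> (x - y))) \<partial>lborel)"
proof -
  have "norm (smoothed_conv_power a \<sigma> (Suc n) x) * exp (\<tau> \<bullet> x)
      \<le> (\<integral>y. norm (complex_of_real (a y) * smoothed_conv_power a \<sigma> n (x - y)) \<partial>lborel) * exp (\<tau> \<bullet> x)"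
    unfolding smoothed_conv_power_Suc[OF \<sigma>] by (intro mult_right_mono integral_norm_bound) simp
  also have "\<dots> = (\<integral>y. norm (complex_of_real (a y) * smoothed_conv_power a \<sigma> n (x - y)) * exp (\<tau> \<bullet> x) \<partial>lborel)"
    by (rule integral_mult_left_zero[symmetric])
  also have "\<dots> = (\<integral>y. (a y * exp (\<tau> \<bullet> y)) * (norm (smoothed_conv_power a \<sigma> n (x - y)) * exp (\<tau> \<bullet> (x - y))) \<partial>lborel)"
  proof (intro Bochner_Integration.integral_cong refl)
    fix y
    have "exp (\<tau> \<bullet> x) = exp (\<tau> \<bullet> y) * exp (\<tau> \<bullet> (x - y))"
      by (simp add: inner_diff_right flip: exp_add)
    then show "norm (complex_of_real (a y) * smoothed_conv_power a \<sigma> n (x - y)) * exp (\<tau> \<bullet> x)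
      = (a y * exp (\<tau> \<bullet> y)) * (norm (smoothed_conv_power a \<sigma> n (x - y)) * exp (\<tau> \<bullet> (x - y)))"
      by (simp add: norm_mult a_nonneg)
  qed
  finally show ?thesis .
qed

text \<open>The weight \<open>exp (\<tau> \<bullet> x)\<close> is multiplicative, so each convolution with \<open>a\<close> costs a factor
  \<open>exp_moment a \<tau>\<close>; the first one costs the supremum \<open>C\<close> of the weighted density instead, which
  absorbs the unbounded weighted Gaussian.\<close>

lemma smoothed_conv_power_weighted_le:
  assumes \<sigma>: "0 < \<sigma>"
    and weight_le: "\<And>y. a y * exp (\<tau> \<bullet> y) \<le> C"
    and weight_int: "integrable lborel (\<lambda>y. a y * exp (\<tau> \<bullet> y))"
  shows "norm (smoothed_conv_power a \<sigma> (Suc n) x) * exp (\<tau> \<bullet> x)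
    \<le> C * ((2*pi)^DIM('a) * exp (\<sigma>^2 * (norm \<tau>)^2 / 2)) * exp_moment a \<tau> ^ n"
proof (induction n arbitrary: x)
  case 0
  have C: "0 \<le> C"
    using weight_le[of 0] a_nonneg[of 0] by simp
  have "norm (smoothed_conv_power a \<sigma> 1 x) * exp (\<tau> \<bullet> x)
      \<le> (\<integral>y. (a y * exp (\<tau> \<bullet> y)) * (gaussian_kernel \<sigma> (x - y) * exp (\<tau> \<bullet> (x - y))) \<partial>lborel)"
    using norm_smoothed_conv_power_Suc_weighted_le[OF \<sigma>, of 0 x \<tau>]
    by (simp add: smoothed_conv_power_0[OF \<sigma>] gaussian_kernel_nonneg[OF \<sigma>])
  also have "\<dots> \<le> (\<integral>y. C * (gaussian_kernel \<sigma> (x - y) * exp (\<tau> \<bullet> (x - y))) \<partial>lborel)"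
    using weight_le C gaussian_kernel_nonneg[OF \<sigma>]
    by (intro Bochner_Integration.integral_mono' integrable_mult_right integrable_lborel_reflect
        integrable_gaussian_kernel_exp[OF \<sigma>] mult_right_mono) (auto intro!: mult_nonneg_nonneg)
  also have "\<dots> = C * ((2*pi)^DIM('a) * exp (\<sigma>^2 * (norm \<tau>)^2 / 2))"
    using integral_lborel_reflect[of "\<lambda>u. gaussian_kernel \<sigma> u * exp (\<tau> \<bullet> u)" x]
    by (simp add: gaussian_kernel_mgf[OF \<sigma>])
  finally show ?case by simp
next
  case (Suc n)
  define K where "K = C * ((2*pi)^DIM('a) * exp (\<sigma>^2 * (norm \<tau>)^2 / 2)) * exp_moment a \<tau> ^ n"
  have K: "0 \<le> K"
    unfolding K_def by (rule order_trans[OF mult_nonneg_nonneg[OF norm_ge_zero exp_ge_zero] Suc.IH])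
  have "norm (smoothed_conv_power a \<sigma> (Suc (Suc n)) x) * exp (\<tau> \<bullet> x)
      \<le> (\<integral>y. (a y * exp (\<tau> \<bullet> y)) * (norm (smoothed_conv_power a \<sigma> (Suc n) (x - y)) * exp (\<tau> \<bullet> (x - y))) \<partial>lborel)"
    by (rule norm_smoothed_conv_power_Suc_weighted_le[OF \<sigma>])
  also have "\<dots> \<le> (\<integral>y. (a y * exp (\<tau> \<bullet> y)) * K \<partial>lborel)"
    using Suc.IH a_nonneg K unfolding K_def
    by (intro Bochner_Integration.integral_mono' integrable_mult_left weight_int mult_left_mono) auto
  also have "\<dots> = C * ((2*pi)^DIM('a) * exp (\<sigma>^2 * (norm \<tau>)^2 / 2)) * exp_moment a \<tau> ^ Suc n"
    by (simp add: K_def exp_moment_def)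
  finally show ?case .
qed

lemma norm_smoothed_trans_integral_weighted_le:
  assumes \<sigma>: "0 < \<sigma>" and t: "0 \<le> t"
    and weight_le: "\<And>y. a y * exp (\<tau> \<bullet> y) \<le> C"
    and weight_int: "integrable lborel (\<lambda>y. a y * exp (\<tau> \<bullet> y))"
  shows "norm (\<integral>k. complex_of_real (gaussian_cutoff \<sigma> k) * exp (\<i> * complex_of_real (k \<bullet> x))
                  * (exp (complex_of_real t * fourier_hat a k 0) - 1) \<partial>lborel) * exp (\<tau> \<bullet> x)
    \<le> C * ((2*pi)^DIM('a) * exp (\<sigma>^2 * (norm \<tau>)^2 / 2)) * (t * exp (t * exp_moment a \<tau>))"
proof -
  define K where "K = C * ((2*pi)^DIM('a) * exp (\<sigma>^2 * (norm \<tau>)^2 / 2))"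
  define M where "M = exp_moment a \<tau>"
  have K: "0 \<le> K"
    using weight_le[of 0] a_nonneg[of 0] by (simp add: K_def)
  define b where "b n = complex_of_real t ^ Suc n / fact (Suc n) * smoothed_conv_power a \<sigma> (Suc n) x" for n
  have "b sums (\<integral>k. complex_of_real (gaussian_cutoff \<sigma> k) * exp (\<i> * complex_of_real (k \<bullet> x))
                  * (exp (complex_of_real t * fourier_hat a k 0) - 1) \<partial>lborel)"
    unfolding b_def smoothed_conv_power_def
    by (rule integral_mult_exp_minus_one_sums)
       (use integrable_smoothed_integrand[OF \<sigma>, of x 0] in \<open>simp_all add: norm_fourier_hat_le_1\<close>)
  moreover have "norm (\<Sum>n<N. b n) * exp (\<tau> \<bullet> x) \<le> K * (t * exp (t * M))" for N
  proof -
    have "norm (\<Sum>n<N. b n) * exp (\<tau> \<bullet> x) \<le> (\<Sum>n<N. norm (b n)) * exp (\<tau> \<bullet> x)"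
      by (intro mult_right_mono norm_sum) simp
    also have "\<dots> = (\<Sum>n<N. t^Suc n / fact (Suc n) * (norm (smoothed_conv_power a \<sigma> (Suc n) x) * exp (\<tau> \<bullet> x)))"
      unfolding sum_distrib_right
      by (intro sum.cong refl) (use t in \<open>simp add: b_def norm_mult norm_divide norm_power del: power_Suc fact_Suc\<close>)
    also have "\<dots> \<le> (\<Sum>n<N. t^Suc n / fact (Suc n) * (K * M^n))"
      using t unfolding K_def M_def
      by (intro sum_mono mult_left_mono smoothed_conv_power_weighted_le[OF \<sigma> weight_le weight_int]) auto
    also have "\<dots> = K * (\<Sum>n<N. t^Suc n / fact (Suc n) * M^n)"
      by (simp add: sum_distrib_left mult_ac)
    also have "\<dots> \<le> K * (t * exp (t * M))"
      using t K exp_moment_nonneg unfolding M_def by (intro mult_left_mono sum_power_Suc_div_fact_le) auto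
    finally show ?thesis .
  qed
  ultimately show ?thesis
    unfolding K_def M_def sums_def
    by (intro LIMSEQ_le_const2[OF tendsto_mult_right[OF tendsto_norm]]) auto
qed

text \<open>The majorant \<open>t e^t |fourier_hat a k 0|\<close> comes from \<open>|e^z - 1| \<le> |z| e^|z|\<close>; this is the
  only place where the integrability of \<open>fourier_hat a\<close> is used.\<close>

lemma tendsto_smoothed_trans_integral:
  assumes hat_L1: "integrable lborel (\<lambda>k. fourier_hat a k 0)" and t: "0 \<le> t" and \<sigma>: "\<sigma> \<longlonglongrightarrow> 0"
  shows "(\<lambda>m. \<integral>k. complex_of_real (gaussian_cutoff (\<sigma> m) k) * exp (\<i> * complex_of_real (k \<bullet> x))
              * (exp (complex_of_real t * fourier_hat a k 0) - 1) \<partial>lborel)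
    \<longlonglongrightarrow> (\<integral>k. exp (\<i> * complex_of_real (k \<bullet> x)) * (exp (complex_of_real t * fourier_hat a k 0) - 1) \<partial>lborel)"
proof -
  define E where "E k = exp (\<i> * complex_of_real (k \<bullet> x)) * (exp (complex_of_real t * fourier_hat a k 0) - 1)" for k
  have E_le: "norm (E k) \<le> t * exp t * norm (fourier_hat a k 0)" for k
  proof -
    have "norm (E k) \<le> t * norm (fourier_hat a k 0) * exp (t * norm (fourier_hat a k 0))"
      using norm_exp_minus_one_le[of "complex_of_real t * fourier_hat a k 0"] t
      by (simp add: E_def norm_mult)
    also have "\<dots> \<le> t * norm (fourier_hat a k 0) * exp t"
      using t norm_fourier_hat_le_1[of k] by (intro mult_left_mono) (auto simp: mult_left_le)
    finally show ?thesis by (simp add: mult_ac)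
  qed
  have "(\<lambda>m. \<integral>k. complex_of_real (gaussian_cutoff (\<sigma> m) k) * E k \<partial>lborel) \<longlonglongrightarrow> (\<integral>k. E k \<partial>lborel)"
  proof (rule integral_dominated_convergence[where w="\<lambda>k. t * exp t * norm (fourier_hat a k 0)"])
    show "integrable lborel (\<lambda>k. t * exp t * norm (fourier_hat a k 0))"
      by (intro integrable_mult_right integrable_norm hat_L1)
    show "AE k in lborel. (\<lambda>m. complex_of_real (gaussian_cutoff (\<sigma> m) k) * E k) \<longlonglongrightarrow> E k"
      using \<sigma> by (intro AE_I2) (auto intro!: tendsto_eq_intros gaussian_cutoff_tendsto_1)
    show "AE k in lborel. norm (complex_of_real (gaussian_cutoff (\<sigma> m) k) * E k) \<le> t * exp t * norm (fourier_hat a k 0)" for m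
    proof (rule AE_I2)
      fix k
      have "norm (complex_of_real (gaussian_cutoff (\<sigma> m) k) * E k) \<le> norm (E k)"
        using gaussian_cutoff_pos[of "\<sigma> m" k] gaussian_cutoff_le_1[of "\<sigma> m" k]
        by (simp add: norm_mult mult_left_le_one_le)
      then show "norm (complex_of_real (gaussian_cutoff (\<sigma> m) k) * E k) \<le> t * exp t * norm (fourier_hat a k 0)"
        using E_le[of k] by linarith
    qed
  qed (simp_all add: E_def)
  then show ?thesis
    by (simp add: E_def mult.assoc)
qed

lemma norm_trans_integral_weighted_le:
  assumes hat_L1: "integrable lborel (\<lambda>k. fourier_hat a k 0)" and t: "0 \<le> t"
    and weight_le: "\<And>y. a y * exp (\<tau> \<bullet> y) \<le> C"
    and weight_int: "integrable lborel (\<lambda>y. a y * exp (\<tau> \<bullet> y))"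
  shows "norm (\<integral>k. exp (\<i> * complex_of_real (k \<bullet> x)) * (exp (complex_of_real t * fourier_hat a k 0) - 1) \<partial>lborel)
      * exp (\<tau> \<bullet> x)
    \<le> C * ((2*pi)^DIM('a) * exp ((norm \<tau>)^2 / 2)) * (t * exp (t * exp_moment a \<tau>))"
proof -
  define \<sigma> where "\<sigma> m = inverse (real (Suc m))" for m
  have "\<sigma> \<longlonglongrightarrow> 0"
    unfolding \<sigma>_def by (rule LIMSEQ_inverse_real_of_nat)
  moreover have "norm (\<integral>k. complex_of_real (gaussian_cutoff (\<sigma> m) k) * exp (\<i> * complex_of_real (k \<bullet> x))
              * (exp (complex_of_real t * fourier_hat a k 0) - 1) \<partial>lborel) * exp (\<tau> \<bullet> x)
      \<le> C * ((2*pi)^DIM('a) * exp ((norm \<tau>)^2 / 2)) * (t * exp (t * exp_moment a \<tau>))" for m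
  proof -
    have \<sigma>: "0 < \<sigma> m" "\<sigma> m \<le> 1"
      by (simp_all add: \<sigma>_def inverse_le_1_iff)
    then have "(\<sigma> m)^2 * (norm \<tau>)^2 \<le> (norm \<tau>)^2"
      by (intro mult_left_le_one_le) (auto simp: power_le_one)
    then have "C * ((2*pi)^DIM('a) * exp ((\<sigma> m)^2 * (norm \<tau>)^2 / 2)) * (t * exp (t * exp_moment a \<tau>))
        \<le> C * ((2*pi)^DIM('a) * exp ((norm \<tau>)^2 / 2)) * (t * exp (t * exp_moment a \<tau>))"
      using weight_le[of 0] a_nonneg[of 0] t by (intro mult_right_mono mult_left_mono) auto
    then show ?thesis
      using norm_smoothed_trans_integral_weighted_le[OF \<sigma>(1) t weight_le weight_int, of x] by linarith
  qed
  ultimately show ?thesis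
    by (intro LIMSEQ_le_const2[OF tendsto_mult_right[OF tendsto_norm[OF tendsto_smoothed_trans_integral[OF hat_L1 t]]]])
       auto
qed

lemma trans_density_le_exp_moment:
  assumes hat_L1: "integrable lborel (\<lambda>k. fourier_hat a k 0)" and t: "0 \<le> t"
    and weight_le: "\<And>y. a y * exp (\<tau> \<bullet> y) \<le> C"
    and weight_int: "integrable lborel (\<lambda>y. a y * exp (\<tau> \<bullet> y))"
  shows "trans_density a t x \<le> C * exp ((norm \<tau>)^2 / 2) * t * exp (t * (exp_moment a \<tau> - 1) - \<tau> \<bullet> x)"
proof -
  define I where "I = (\<integral>k. exp (\<i> * complex_of_real (k \<bullet> x)) * (exp (complex_of_real t * fourier_hat a k 0) - 1) \<partial>lborel)"
  have "trans_density a t x \<le> norm (complex_of_real (exp (- t) / (2 * pi) ^ DIM('a)) * I)"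
    unfolding trans_density_def I_def by (rule complex_Re_le_cmod)
  also have "\<dots> = exp (- t) / (2 * pi) ^ DIM('a) * norm I"
    unfolding norm_mult norm_of_real by simp
  also have "\<dots> = exp (- t) / (2 * pi) ^ DIM('a) * (norm I * exp (\<tau> \<bullet> x)) * exp (- (\<tau> \<bullet> x))"
    by (simp add: exp_minus)
  also have "\<dots> \<le> exp (- t) / (2 * pi) ^ DIM('a)
      * (C * ((2*pi)^DIM('a) * exp ((norm \<tau>)^2 / 2)) * (t * exp (t * exp_moment a \<tau>))) * exp (- (\<tau> \<bullet> x))"
    unfolding I_def by (intro mult_right_mono mult_left_mono norm_trans_integral_weighted_le[OF hat_L1 t weight_le weight_int]) auto
  also have "\<dots> = C * exp ((norm \<tau>)^2 / 2) * t * exp (t * (exp_moment a \<tau> - 1) - \<tau> \<bullet> x)"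
    by (simp add: exp_diff exp_minus exp_add field_simps)
  finally show ?thesis .
qed

end

section \<open>The exponential moment near the origin\<close>

lemma sinh_scale_le:
  fixes l s :: real
  assumes l: "0 \<le> l" "l \<le> 1" and s: "0 \<le> s"
  shows "sinh (l * s) \<le> l * sinh s"
proof -
  have "(\<lambda>u. l * sinh u - sinh (l * u)) 0 \<le> (\<lambda>u. l * sinh u - sinh (l * u)) s"
  proof (rule DERIV_nonneg_imp_nondecreasing[OF s])
    fix u :: real assume u: "0 \<le> u" "u \<le> s"
    have "cosh (l * u) \<le> cosh u"
      using l u by (subst cosh_real_nonneg_le_iff) (auto simp: mult_left_le_one_le)
    then have "0 \<le> l * cosh u - cosh (l * u) * l"
      using l by (simp add: algebra_simps mult_left_mono)
    moreover have "((\<lambda>u. l * sinh u - sinh (l * u)) has_real_derivative (l * cosh u - cosh (l * u) * l)) (at u)"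
      by (auto intro!: derivative_eq_intros)
    ultimately show "\<exists>y. ((\<lambda>u. l * sinh u - sinh (l * u)) has_real_derivative y) (at u) \<and> 0 \<le> y"
      by blast
  qed
  then show ?thesis by simp
qed

lemma cosh_scale_le:
  fixes l s :: real
  assumes l: "0 \<le> l" "l \<le> 1"
  shows "cosh (l * s) - 1 \<le> l^2 * (cosh s - 1)"
proof -
  have nonneg: "cosh (l * s) - 1 \<le> l^2 * (cosh s - 1)" if s: "0 \<le> s" for s
  proof -
    have "(\<lambda>u. l^2 * (cosh u - 1) - (cosh (l * u) - 1)) 0 \<le> (\<lambda>u. l^2 * (cosh u - 1) - (cosh (l * u) - 1)) s"
    proof (rule DERIV_nonneg_imp_nondecreasing[OF s])
      fix u :: real assume u: "0 \<le> u" "u \<le> s"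
      have "0 \<le> l^2 * sinh u - sinh (l * u) * l"
        using sinh_scale_le[OF l u(1)] l by (simp add: power2_eq_square algebra_simps mult_left_mono)
      moreover have "((\<lambda>u. l^2 * (cosh u - 1) - (cosh (l * u) - 1)) has_real_derivative (l^2 * sinh u - sinh (l * u) * l)) (at u)"
        by (auto intro!: derivative_eq_intros)
      ultimately show "\<exists>y. ((\<lambda>u. l^2 * (cosh u - 1) - (cosh (l * u) - 1)) has_real_derivative y) (at u) \<and> 0 \<le> y"
        by blast
    qed
    then show ?thesis by simp
  qed
  show ?thesis
    using nonneg[of s] nonneg[of "- s"] by (cases "0 \<le> s") auto
qed

context jump_density
begin

lemma weight_le_decay:
  assumes decay: "\<And>y. a y \<le> C * exp (- \<delta> * norm y)" and \<tau>: "norm \<tau> \<le> e"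
  shows "a y * exp (\<tau> \<bullet> y) \<le> C * exp (- (\<delta> - e) * norm y)"
proof -
  have "\<tau> \<bullet> y \<le> e * norm y"
    using order_trans[OF norm_cauchy_schwarz mult_right_mono[OF \<tau> norm_ge_zero]] .
  then have "a y * exp (\<tau> \<bullet> y) \<le> C * exp (- \<delta> * norm y) * exp (e * norm y)"
    using a_nonneg[of y] decay[of y] by (intro mult_mono) auto
  then show ?thesis
    by (simp add: algebra_simps flip: exp_add)
qed

lemma integrable_weight:
  assumes decay: "\<And>y. a y \<le> C * exp (- \<delta> * norm y)" and \<tau>: "norm \<tau> \<le> e" and "e < \<delta>"
  shows "integrable lborel (\<lambda>y. a y * exp (\<tau> \<bullet> y))"
proof (rule Bochner_Integration.integrable_bound)
  show "integrable lborel (\<lambda>y::'a. C * exp (- (\<delta> - e) * norm y))"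
    using \<open>e < \<delta>\<close> by (intro integrable_mult_right integrable_exp_neg_norm) simp
  show "AE y in lborel. norm (a y * exp (\<tau> \<bullet> y)) \<le> norm (C * exp (- (\<delta> - e) * norm y))"
    using weight_le_decay[OF decay \<tau>] a_nonneg by (intro AE_I2) (simp add: order_trans[OF _ abs_ge_self])
qed measurable

lemma
  assumes symm: "\<And>y. a y = a (- y)" and weight_int: "integrable lborel (\<lambda>y. a y * exp (\<tau> \<bullet> y))"
  shows integrable_cosh_weight: "integrable lborel (\<lambda>y. a y * cosh (\<tau> \<bullet> y))"
    and integral_cosh_weight: "(\<integral>y. a y * cosh (\<tau> \<bullet> y) \<partial>lborel) = exp_moment a \<tau>"
proof -
  have reflect: "a (0 - y) * exp (\<tau> \<bullet> (0 - y)) = a y * exp ((- \<tau>) \<bullet> y)" for y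
    using symm[of y] by simp
  have cosh: "a y * cosh (\<tau> \<bullet> y) = (a y * exp (\<tau> \<bullet> y) + a y * exp ((- \<tau>) \<bullet> y)) / 2" for y
    by (simp add: cosh_def algebra_simps)
  have int_reflect: "integrable lborel (\<lambda>y. a y * exp ((- \<tau>) \<bullet> y))"
    using integrable_lborel_reflect[OF weight_int, of 0] by (simp only: reflect)
  show "integrable lborel (\<lambda>y. a y * cosh (\<tau> \<bullet> y))"
    unfolding cosh using weight_int int_reflect by simp
  have "(\<integral>y. a y * exp ((- \<tau>) \<bullet> y) \<partial>lborel) = exp_moment a \<tau>"
    using integral_lborel_reflect[of "\<lambda>y. a y * exp (\<tau> \<bullet> y)" 0] by (simp only: reflect exp_moment_def)
  then show "(\<integral>y. a y * cosh (\<tau> \<bullet> y) \<partial>lborel) = exp_moment a \<tau>"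
    unfolding cosh using weight_int int_reflect by (simp add: exp_moment_def)
qed

text \<open>By symmetry the moment is \<open>\<integral> a(y) cosh (\<sigma> \<bullet> y) dy\<close>, and \<open>cosh (l s) - 1 \<le> l^2 (cosh s - 1)\<close>.\<close>

lemma exp_moment_scaleR_le:
  assumes symm: "\<And>y. a y = a (- y)" and l: "0 \<le> l" "l \<le> 1"
    and int_\<sigma>: "integrable lborel (\<lambda>y. a y * exp (\<sigma> \<bullet> y))"
    and int_l\<sigma>: "integrable lborel (\<lambda>y. a y * exp ((l *\<^sub>R \<sigma>) \<bullet> y))"
  shows "exp_moment a (l *\<^sub>R \<sigma>) - 1 \<le> l^2 * exp_moment a \<sigma>"
proof -
  have "exp_moment a (l *\<^sub>R \<sigma>) - 1 = (\<integral>y. a y * cosh ((l *\<^sub>R \<sigma>) \<bullet> y) \<partial>lborel) - 1"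
    using integral_cosh_weight[OF symm int_l\<sigma>] by simp
  also have "\<dots> = (\<integral>y. a y * (cosh (l * (\<sigma> \<bullet> y)) - 1) \<partial>lborel)"
    using integrable_cosh_weight[OF symm int_l\<sigma>] a_integrable a_integral by (simp add: algebra_simps)
  also have "\<dots> \<le> (\<integral>y. l^2 * (a y * cosh (\<sigma> \<bullet> y)) \<partial>lborel)"
  proof (rule Bochner_Integration.integral_mono)
    show "integrable lborel (\<lambda>y. a y * (cosh (l * (\<sigma> \<bullet> y)) - 1))"
      using integrable_cosh_weight[OF symm int_l\<sigma>] a_integrable by (simp add: algebra_simps)
    show "integrable lborel (\<lambda>y. l^2 * (a y * cosh (\<sigma> \<bullet> y)))"
      using integrable_cosh_weight[OF symm int_\<sigma>] by simp
    fix y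
    have "cosh (l * (\<sigma> \<bullet> y)) - 1 \<le> l^2 * (cosh (\<sigma> \<bullet> y) - 1)"
      by (rule cosh_scale_le[OF l])
    also have "\<dots> \<le> l^2 * cosh (\<sigma> \<bullet> y)"
      by (simp add: algebra_simps)
    finally show "a y * (cosh (l * (\<sigma> \<bullet> y)) - 1) \<le> l^2 * (a y * cosh (\<sigma> \<bullet> y))"
      using a_nonneg[of y] by (metis mult.left_commute mult_left_mono)
  qed
  also have "\<dots> = l^2 * exp_moment a \<sigma>"
    by (simp add: integral_cosh_weight[OF symm int_\<sigma>])
  finally show ?thesis .
qed

lemma exp_moment_le_decay:
  assumes decay: "\<And>y. a y \<le> C * exp (- \<delta> * norm y)" and \<sigma>: "norm \<sigma> \<le> e" and "e < \<delta>"
  shows "exp_moment a \<sigma> \<le> C * (\<integral>y. exp (- (\<delta> - e) * norm (y::'a)) \<partial>lborel)"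
  unfolding exp_moment_def integral_mult_right_zero[symmetric]
  using weight_le_decay[OF decay \<sigma>] \<open>e < \<delta>\<close>
  by (intro Bochner_Integration.integral_mono integrable_weight[OF decay \<sigma>] integrable_mult_right
      integrable_exp_neg_norm) auto

lemma exp_moment_le:
  assumes symm: "\<And>y. a y = a (- y)" and decay: "\<And>y. a y \<le> C * exp (- \<delta> * norm y)"
    and e0: "0 < e0" "e0 < \<delta>" and \<tau>: "norm \<tau> \<le> e0"
  shows "exp_moment a \<tau> \<le> 1 + C * (\<integral>y. exp (- (\<delta> - e0) * norm (y::'a)) \<partial>lborel) / e0^2 * (norm \<tau>)^2"
proof (cases "\<tau> = 0")
  case True
  then show ?thesis
    using a_integral by (simp add: exp_moment_def)
next
  case False
  define l where "l = norm \<tau> / e0"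
  define \<sigma> where "\<sigma> = (1 / l) *\<^sub>R \<tau>"
  have l: "0 \<le> l" "l \<le> 1"
    using e0 \<tau> by (simp_all add: l_def)
  have \<sigma>: "norm \<sigma> = e0" and \<tau>_eq: "\<tau> = l *\<^sub>R \<sigma>"
    using e0 False by (simp_all add: \<sigma>_def l_def)
  have int_\<sigma>: "integrable lborel (\<lambda>y. a y * exp (\<sigma> \<bullet> y))"
    by (rule integrable_weight[OF decay _ e0(2)]) (simp add: \<sigma>)
  have "exp_moment a \<tau> - 1 \<le> l^2 * exp_moment a \<sigma>"
    using exp_moment_scaleR_le[OF symm l int_\<sigma>] integrable_weight[OF decay \<tau> e0(2)] by (simp flip: \<tau>_eq)
  also have "\<dots> \<le> l^2 * (C * (\<integral>y. exp (- (\<delta> - e0) * norm (y::'a)) \<partial>lborel))"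
    by (intro mult_left_mono exp_moment_le_decay[OF decay _ e0(2)]) (simp_all add: \<sigma>)
  finally show ?thesis
    by (simp add: l_def power_divide mult_ac)
qed

lemma trans_density_le:
  assumes hat_L1: "integrable lborel (\<lambda>k. fourier_hat a k 0)"
    and symm: "\<And>y. a y = a (- y)" and decay: "\<And>y. a y \<le> C * exp (- \<delta> * norm y)"
    and e0: "0 < e0" "e0 < \<delta>" and \<epsilon>: "0 \<le> \<epsilon>" "\<epsilon> \<le> e0" and t: "0 < t" and x: "x \<noteq> 0"
  shows "trans_density a t x
    \<le> C * exp (\<epsilon>^2 / 2) * t
        * exp (C * (\<integral>y. exp (- (\<delta> - e0) * norm (y::'a)) \<partial>lborel) / e0^2 * \<epsilon>^2 * t - \<epsilon> * norm x)"
proof -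
  define \<tau> where "\<tau> = (\<epsilon> / norm x) *\<^sub>R x"
  have \<tau>: "norm \<tau> = \<epsilon>" "\<tau> \<bullet> x = \<epsilon> * norm x"
    using x \<epsilon> by (simp_all add: \<tau>_def dot_square_norm power2_eq_square)
  then have \<tau>_le: "norm \<tau> \<le> e0"
    using \<epsilon> by simp
  have weight_le: "a y * exp (\<tau> \<bullet> y) \<le> C" for y
  proof -
    have "C * exp (- (\<delta> - \<epsilon>) * norm y) \<le> C * 1"
      using decay[of 0] a_nonneg[of 0] \<epsilon> e0 by (intro mult_left_mono) (auto simp: mult_nonpos_nonneg)
    then show ?thesis
      using weight_le_decay[OF decay, of \<tau> \<epsilon> y] \<tau> by simp
  qed
  have "t * (exp_moment a \<tau> - 1) \<le> t * (C * (\<integral>y. exp (- (\<delta> - e0) * norm (y::'a)) \<partial>lborel) / e0^2 * \<epsilon>^2)"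
    using exp_moment_le[OF symm decay e0 \<tau>_le] t by (intro mult_left_mono) (simp_all add: \<tau>)
  then have "C * exp (\<epsilon>^2 / 2) * t * exp (t * (exp_moment a \<tau> - 1) - \<epsilon> * norm x)
    \<le> C * exp (\<epsilon>^2 / 2) * t
        * exp (C * (\<integral>y. exp (- (\<delta> - e0) * norm (y::'a)) \<partial>lborel) / e0^2 * \<epsilon>^2 * t - \<epsilon> * norm x)"
    using decay[of 0] a_nonneg[of 0] t by (intro mult_left_mono) (auto simp: mult_ac)
  then show ?thesis
    using trans_density_le_exp_moment[OF hat_L1 less_imp_le[OF t] weight_le integrable_weight[OF decay \<tau>_le e0(2)], of x]
    unfolding \<tau> by linarith
qed

end

theorem mainTheorem10:
  fixes a :: "'a::euclidean_space \<Rightarrow> real"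
    and C \<delta> \<epsilon>0 C' :: real
  assumes nonneg: "\<And>y. a y \<ge> 0"
    and symm: "\<And>y. a y = a (- y)"
    and a_int: "integrable lborel a"
    and a_one: "(LINT y|lborel. a y) = 1"
    and hat_L1: "integrable lborel (\<lambda>k. fourier_hat a k 0)"
    and \<delta>_pos: "\<delta> > 0"
    and decay: "\<And>y. \<bar>a y\<bar> < C * exp (- \<delta> * norm y)"
    and \<epsilon>0: "0 < \<epsilon>0" "\<epsilon>0 < \<delta>"
    and strip: "\<And>\<tau>. norm \<tau> \<le> \<epsilon>0 \<Longrightarrow>
                 integrable lborel (\<lambda>k. fourier_hat a k \<tau>) \<and>
                 (LINT k|lborel. norm (fourier_hat a k \<tau>)) \<le> C'"
  shows "\<exists>\<alpha> C''. \<exists>\<epsilon>1>0. \<forall>\<epsilon>. 0 \<le> \<epsilon> \<and> \<epsilon> < \<epsilon>1 \<longrightarrow>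
           (\<forall>t>0. \<forall>x. x \<noteq> 0 \<longrightarrow>
              trans_density a t x \<le> C'' * t * exp (\<alpha> * \<epsilon>^2 * t - \<epsilon> * norm x))"
proof -
  interpret jump_density a
    using nonneg a_int a_one by unfold_locales
  have decay': "a y \<le> C * exp (- \<delta> * norm y)" for y
    using decay[of y] by simp
  define \<alpha> where "\<alpha> = C * (\<integral>y. exp (- (\<delta> - \<epsilon>0) * norm (y::'a)) \<partial>lborel) / \<epsilon>0^2"
  have "trans_density a t x \<le> (C * exp 1) * t * exp (\<alpha> * \<epsilon>^2 * t - \<epsilon> * norm x)"
    if \<epsilon>: "0 \<le> \<epsilon>" "\<epsilon> < min 1 \<epsilon>0" and t: "0 < t" and x: "x \<noteq> 0" for \<epsilon> t x
  proof -
    have "\<epsilon>^2 \<le> 1"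
      using \<epsilon> by (simp add: power_le_one)
    then have "C * exp (\<epsilon>^2 / 2) * t \<le> C * exp 1 * t"
      using decay[of 0] t by (intro mult_right_mono mult_left_mono) auto
    then have "C * exp (\<epsilon>^2 / 2) * t * exp (\<alpha> * \<epsilon>^2 * t - \<epsilon> * norm x)
        \<le> C * exp 1 * t * exp (\<alpha> * \<epsilon>^2 * t - \<epsilon> * norm x)"
      by (rule mult_right_mono) simp
    moreover have "\<epsilon> \<le> \<epsilon>0"
      using \<epsilon> by simp
    ultimately show ?thesis
      using trans_density_le[OF hat_L1 symm decay' \<epsilon>0 \<epsilon>(1) _ t x] unfolding \<alpha>_def by fastforce
  qed
  moreover have "0 < min 1 \<epsilon>0"
    using \<epsilon>0 by simp
  ultimately show ?thesis
    by blast
qed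

end
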